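(* Let $V$ be a finite-dimensional real vector space, let $\varphi\colon\mathcal{K}(V)\to A$ be a continuous translation-invariant valuation with values in a Hausdorff topological abelian group $A$, and let $X$ be a convex body of dimension $d$ in $V$. Then the function $[0,\infty)\to A$, $\lambda\mapsto\varphi(\lambda X)$, vanishes under $\Delta_{b_1}\cdots\Delta_{b_{d+1}}$ for any $b_1,\ldots,b_{d+1}\in[0,\infty)$.
   Context: A convex body is a nonempty compact convex subset of $V$; $\mathcal{K}(V)$ is the set of convex bodies with the Hausdorff metric topology; the dimension of a convex body is the dimension of its affine hull. A valuation satisfies $\varphi(B\cup C)=\varphi(B)+\varphi(C)-\varphi(B\cap C)$ whenever $B,C,B\cup C\in\mathcal{K}(V)$. For $u\in[0,\infty)$ and $h\colon[0,\infty)\to A$, $(\Delta_u h)(a)=h(a+u)-h(a)$. *)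

theory Defs
  imports "HOL-Analysis.Analysis"
begin

definition convex_bodies :: "'v::euclidean_space set set" where
  "convex_bodies = {K. K \<noteq> {} \<and> compact K \<and> convex K}"

definition hausdorff_dist :: "'v::euclidean_space set \<Rightarrow> 'v set \<Rightarrow> real" where
  "hausdorff_dist K L =
     max (SUP x\<in>K. setdist {x} L) (SUP y\<in>L. setdist {y} K)"

definition continuous_on_bodies :: "('v::euclidean_space set \<Rightarrow> 'a::topological_space) \<Rightarrow> bool" where
  "continuous_on_bodies \<phi> \<longleftrightarrow>
     (\<forall>K\<in>convex_bodies. \<forall>U. open U \<and> \<phi> K \<in> U \<longrightarrow>
        (\<exists>e>0. \<forall>L\<in>convex_bodies. hausdorff_dist K L < e \<longrightarrow> \<phi> L \<in> U))"

definition is_valuation :: "('v::euclidean_space set \<Rightarrow> 'a::ab_group_add) \<Rightarrow> bool" where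
  "is_valuation \<phi> \<longleftrightarrow>
     (\<forall>B C. B \<in> convex_bodies \<and> C \<in> convex_bodies \<and> B \<union> C \<in> convex_bodies \<longrightarrow>
        \<phi> (B \<union> C) = \<phi> B + \<phi> C - \<phi> (B \<inter> C))"

definition translation_invariant :: "('v::euclidean_space set \<Rightarrow> 'a) \<Rightarrow> bool" where
  "translation_invariant \<phi> \<longleftrightarrow>
     (\<forall>K\<in>convex_bodies. \<forall>x. \<phi> ((\<lambda>y. x + y) ` K) = \<phi> K)"

text \<open>Difference operator: (\<Delta>_u h)(a) = h(a+u) - h(a). Functions on [0,\<infinity>) are
  represented as functions on real, only evaluated at nonnegative arguments.\<close>
definition diff_op :: "real \<Rightarrow> (real \<Rightarrow> 'a::ab_group_add) \<Rightarrow> real \<Rightarrow> 'a" where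
  "diff_op u h = (\<lambda>a. h (a + u) - h a)"

definition diff_ops :: "real list \<Rightarrow> (real \<Rightarrow> 'a::ab_group_add) \<Rightarrow> real \<Rightarrow> 'a" where
  "diff_ops bs h = foldr diff_op bs h"

end

theory Submission
  imports Defs
begin

text \<open>
  For polytopes induct on the dimension, simultaneously for all translation invariant valuations.
  After a translation, \<open>0 \<in> P\<close> and \<open>P = {x. a \<bullet> x \<le> 0 (a \<in> A), g \<bullet> x \<le> 1 (g \<in> G)}\<close>.
  Cutting \<open>P\<close> by a hyperplane writes \<open>\<phi>(tP)\<close>, by the valuation property, as the sum over the two
  halves minus the slice, and the slice has lower dimension; so it suffices to treat the pieces
  cut out by the cones of the arrangement of the hyperplanes \<open>(g - g') \<bullet> x = 0\<close>. On such a cone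
  one normal \<open>k \<in> G\<close> dominates the others, so the piece is the pyramid \<open>Y\<close> with apex 0 over its
  slice \<open>B\<close> by \<open>k \<bullet> x = 1\<close>. Now \<open>(s + r) Y = s Y \<union> (s B + r Y)\<close> and \<open>s Y \<inter> (s B + r Y) = s B\<close>,
  so one difference step turns \<open>\<phi>(t Y)\<close> into \<open>\<psi>(s B)\<close> with \<open>\<psi> K = \<phi>(K + r Y) - \<phi> K\<close>, again a
  translation invariant valuation, and the induction hypothesis applies to \<open>B\<close>.
  A general convex body is the Hausdorff limit of polytopes inside it, and continuity of \<open>\<phi>\<close>
  carries the vanishing differences to the limit.
\<close>

section \<open>Iterated differences\<close>

lemma diff_ops_Nil [simp]: "diff_ops [] h = h"
  by (simp add: diff_ops_def)

lemma diff_ops_Cons: "diff_ops (b # bs) h a = diff_ops bs h (a + b) - diff_ops bs h a"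
  by (simp add: diff_ops_def diff_op_def)

lemma diff_ops_append_single: "diff_ops (bs @ [b]) h = diff_ops bs (diff_op b h)"
  by (simp add: diff_ops_def)

lemma diff_ops_cong_nonneg:
  assumes "\<And>t. t \<ge> 0 \<Longrightarrow> f t = g t" "\<forall>b\<in>set bs. b \<ge> 0" "a \<ge> 0"
  shows "diff_ops bs f a = diff_ops bs g a"
  using assms(2,3) by (induction bs arbitrary: a) (simp_all add: assms(1) diff_ops_Cons)

lemma diff_ops_add_diff:
  "diff_ops bs (\<lambda>t. f t + g t - h t) a = diff_ops bs f a + diff_ops bs g a - diff_ops bs h a"
  by (induction bs arbitrary: a) (simp_all add: diff_ops_Cons algebra_simps)

lemma diff_ops_const: "bs \<noteq> [] \<Longrightarrow> diff_ops bs (\<lambda>_. c) a = 0"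
  by (induction bs arbitrary: a rule: list_nonempty_induct) (simp_all add: diff_ops_Cons)

lemma tendsto_diff_ops:
  fixes f :: "nat \<Rightarrow> real \<Rightarrow> 'a::topological_ab_group_add"
  assumes "\<And>t. t \<ge> 0 \<Longrightarrow> (\<lambda>n. f n t) \<longlonglongrightarrow> g t" "\<forall>b\<in>set bs. b \<ge> 0" "a \<ge> 0"
  shows "(\<lambda>n. diff_ops bs (f n) a) \<longlonglongrightarrow> diff_ops bs g a"
  using assms(2,3) by (induction bs arbitrary: a) (simp_all add: assms(1) diff_ops_Cons tendsto_diff)

section \<open>Convex bodies, Minkowski sums and valuations\<close>

lemma convex_bodies_scaling: "K \<in> convex_bodies \<Longrightarrow> (\<lambda>x. t *\<^sub>R x) ` K \<in> convex_bodies"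
  by (auto simp: convex_bodies_def compact_scaling convex_scaling)

lemma convex_bodies_set_plus:
  assumes "K \<in> convex_bodies" "L \<in> convex_bodies"
  shows "K + L \<in> convex_bodies"
proof -
  have "K + L = {x + y |x y. x \<in> K \<and> y \<in> L}"
    by (auto simp: set_plus_def)
  then have "compact (K + L)"
    using assms compact_sums[of K L] by (simp add: convex_bodies_def)
  moreover have "convex (K + L)"
    using assms by (simp add: convex_bodies_def convex_set_plus)
  moreover have "K + L \<noteq> {}"
    using assms by (auto simp: convex_bodies_def set_plus_def)
  ultimately show ?thesis
    by (simp add: convex_bodies_def)
qed

lemma polytope_in_convex_bodies: "polytope P \<Longrightarrow> P \<noteq> {} \<Longrightarrow> P \<in> convex_bodies"
  by (simp add: convex_bodies_def polytope_imp_compact polytope_imp_convex)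

lemma closed_segment_meets_Int:
  fixes K1 K2 :: "'v::real_normed_vector set"
  assumes "closed K1" "closed K2" "convex (K1 \<union> K2)" "k1 \<in> K1" "k2 \<in> K2"
  obtains z where "z \<in> closed_segment k1 k2" "z \<in> K1" "z \<in> K2"
proof -
  let ?S = "closed_segment k1 k2"
  have "?S \<subseteq> K1 \<union> K2"
    using assms(3-5) by (simp add: closed_segment_subset)
  then have "?S = (?S \<inter> K1) \<union> (?S \<inter> K2)"
    by blast
  moreover have "closed (?S \<inter> K1)" "closed (?S \<inter> K2)" "?S \<inter> K1 \<noteq> {}" "?S \<inter> K2 \<noteq> {}"
    using assms by (auto intro: closed_Int)
  ultimately have "(?S \<inter> K1) \<inter> (?S \<inter> K2) \<noteq> {}"
    using connected_closed_set[of ?S] by (metis closed_segment connected_segment)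
  then show thesis
    using that by blast
qed

lemma convex_bodies_Int:
  assumes "B \<in> convex_bodies" "C \<in> convex_bodies" "B \<union> C \<in> convex_bodies"
  shows "B \<inter> C \<in> convex_bodies"
proof -
  obtain b c where "b \<in> B" "c \<in> C"
    using assms unfolding convex_bodies_def by blast
  then obtain z where "z \<in> B" "z \<in> C"
    using assms closed_segment_meets_Int[of B C b c] by (auto simp: convex_bodies_def compact_imp_closed)
  then show ?thesis
    using assms by (auto simp: convex_bodies_def compact_Int compact_imp_closed convex_Int)
qed

lemma set_plus_Int_distrib:
  fixes K1 K2 Y :: "'v::real_normed_vector set"
  assumes "closed K1" "closed K2" "convex (K1 \<union> K2)" "convex Y"
  shows "(K1 \<inter> K2) + Y = (K1 + Y) \<inter> (K2 + Y)"
proof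
  show "(K1 \<inter> K2) + Y \<subseteq> (K1 + Y) \<inter> (K2 + Y)"
    by (auto simp: set_plus_def)
  show "(K1 + Y) \<inter> (K2 + Y) \<subseteq> (K1 \<inter> K2) + Y"
  proof
    fix x assume "x \<in> (K1 + Y) \<inter> (K2 + Y)"
    then obtain k1 y1 k2 y2 where k: "k1 \<in> K1" "k2 \<in> K2" and y: "y1 \<in> Y" "y2 \<in> Y"
      and x: "x = k1 + y1" "x = k2 + y2"
      by (meson IntE set_plus_elim)
    obtain z where z: "z \<in> closed_segment k1 k2" "z \<in> K1 \<inter> K2"
      using closed_segment_meets_Int[OF assms(1-3) k] by blast
    then obtain u where u: "0 \<le> u" "u \<le> 1" "z = (1 - u) *\<^sub>R k1 + u *\<^sub>R k2"
      unfolding closed_segment_def by blast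
    have y_comb: "(1 - u) *\<^sub>R y1 + u *\<^sub>R y2 \<in> Y"
      using assms(4) y u by (simp add: convex_def)
    have "x = z + ((1 - u) *\<^sub>R y1 + u *\<^sub>R y2)"
    proof -
      have "x = (1 - u) *\<^sub>R x + u *\<^sub>R x"
        by (simp add: algebra_simps)
      also have "\<dots> = (1 - u) *\<^sub>R (k1 + y1) + u *\<^sub>R (k2 + y2)"
        by (simp only: flip: x(1,2))
      also have "\<dots> = z + ((1 - u) *\<^sub>R y1 + u *\<^sub>R y2)"
        using u(3) by (simp add: algebra_simps)
      finally show ?thesis .
    qed
    then show "x \<in> (K1 \<inter> K2) + Y"
      using z(2) y_comb by (simp add: set_plus_intro)
  qed
qed

lemma translation_set_plus:
  fixes x :: "'a::semigroup_add"
  shows "(\<lambda>y. x + y) ` (K + Y) = (\<lambda>y. x + y) ` K + Y"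
proof -
  have translation_eq: "(\<lambda>y. x + y) ` S = {x} + S" for S :: "'a set"
    by (auto simp: set_plus_def)
  show ?thesis
    by (simp add: translation_eq add.assoc)
qed

lemma is_valuation_dilation:
  fixes \<phi> :: "'v::euclidean_space set \<Rightarrow> 'a::ab_group_add"
  assumes "is_valuation \<phi>"
  shows "is_valuation (\<lambda>K. \<phi> ((\<lambda>x. t *\<^sub>R x) ` K))"
  unfolding is_valuation_def
proof (intro allI impI, elim conjE)
  fix B C :: "'v set"
  assume B: "B \<in> convex_bodies" and C: "C \<in> convex_bodies" and BC: "B \<union> C \<in> convex_bodies"
  let ?s = "\<lambda>K. (\<lambda>x. t *\<^sub>R x) ` K"
  show "\<phi> (?s (B \<union> C)) = \<phi> (?s B) + \<phi> (?s C) - \<phi> (?s (B \<inter> C))"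
  proof (cases "t = 0")
    case True
    have "B \<inter> C \<noteq> {}"
      using convex_bodies_Int[OF B C BC] by (simp add: convex_bodies_def)
    then show ?thesis
      using B C True by (auto simp: convex_bodies_def image_constant_conv)
  next
    case False
    then have "inj (\<lambda>x::'v. t *\<^sub>R x)"
      by (simp add: inj_on_def)
    then have Int: "?s (B \<inter> C) = ?s B \<inter> ?s C"
      by (simp add: image_Int)
    have "?s B \<in> convex_bodies" "?s C \<in> convex_bodies" "?s B \<union> ?s C \<in> convex_bodies"
      using B C convex_bodies_scaling[OF BC] by (simp_all add: convex_bodies_scaling image_Un)
    then have "\<phi> (?s B \<union> ?s C) = \<phi> (?s B) + \<phi> (?s C) - \<phi> (?s B \<inter> ?s C)"
      using assms unfolding is_valuation_def by blast
    then show ?thesis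
      by (simp add: image_Un Int)
  qed
qed

lemma is_valuation_set_plus_diff:
  fixes \<phi> :: "'v::euclidean_space set \<Rightarrow> 'a::ab_group_add"
  assumes "is_valuation \<phi>" "Y \<in> convex_bodies"
  shows "is_valuation (\<lambda>K. \<phi> (K + Y) - \<phi> K)"
  unfolding is_valuation_def
proof (intro allI impI, elim conjE)
  fix B C :: "'v set"
  assume B: "B \<in> convex_bodies" and C: "C \<in> convex_bodies" and BC: "B \<union> C \<in> convex_bodies"
  have "(B \<inter> C) + Y = (B + Y) \<inter> (C + Y)"
    using B C BC assms(2) by (intro set_plus_Int_distrib) (auto simp: convex_bodies_def compact_imp_closed)
  moreover have Un: "(B \<union> C) + Y = (B + Y) \<union> (C + Y)"
    by (auto simp: set_plus_def)
  moreover have "\<phi> ((B + Y) \<union> (C + Y)) = \<phi> (B + Y) + \<phi> (C + Y) - \<phi> ((B + Y) \<inter> (C + Y))"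
    using assms(1) convex_bodies_set_plus[OF B assms(2)] convex_bodies_set_plus[OF C assms(2)]
      convex_bodies_set_plus[OF BC assms(2)]
    unfolding is_valuation_def Un by blast
  moreover have "\<phi> (B \<union> C) = \<phi> B + \<phi> C - \<phi> (B \<inter> C)"
    using assms(1) B C BC unfolding is_valuation_def by blast
  ultimately show "\<phi> ((B \<union> C) + Y) - \<phi> (B \<union> C)
      = (\<phi> (B + Y) - \<phi> B) + (\<phi> (C + Y) - \<phi> C) - (\<phi> ((B \<inter> C) + Y) - \<phi> (B \<inter> C))"
    by (simp add: algebra_simps)
qed

lemma translation_invariant_set_plus_diff:
  fixes \<phi> :: "'v::euclidean_space set \<Rightarrow> 'a::ab_group_add"
  assumes "translation_invariant \<phi>" "Y \<in> convex_bodies"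
  shows "translation_invariant (\<lambda>K. \<phi> (K + Y) - \<phi> K)"
  unfolding translation_invariant_def
proof (intro ballI allI)
  fix K :: "'v set" and x :: 'v
  assume K: "K \<in> convex_bodies"
  then have "K + Y \<in> convex_bodies"
    using assms(2) by (rule convex_bodies_set_plus)
  then show "\<phi> ((\<lambda>y. x + y) ` K + Y) - \<phi> ((\<lambda>y. x + y) ` K) = \<phi> (K + Y) - \<phi> K"
    using assms(1) K by (simp add: translation_invariant_def translation_set_plus[symmetric])
qed

section \<open>Cutting polytopes by hyperplanes\<close>

definition dilation_degree_le :: "('v::euclidean_space set \<Rightarrow> 'a::ab_group_add) \<Rightarrow> nat \<Rightarrow> 'v set \<Rightarrow> bool" where
  "dilation_degree_le \<phi> d P \<longleftrightarrow> (\<forall>bs a. length bs > d \<longrightarrow> (\<forall>b\<in>set bs. b \<ge> 0) \<longrightarrow> a \<ge> 0 \<longrightarrow>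
      diff_ops bs (\<lambda>t. \<phi> ((\<lambda>x. t *\<^sub>R x) ` P)) a = 0)"

lemma dilation_degree_le_mono: "dilation_degree_le \<phi> d P \<Longrightarrow> d \<le> d' \<Longrightarrow> dilation_degree_le \<phi> d' P"
  unfolding dilation_degree_le_def by auto

lemma dilation_degree_le_const:
  assumes "\<And>t. \<phi> ((\<lambda>x. t *\<^sub>R x) ` P) = c"
  shows "dilation_degree_le \<phi> d P"
  unfolding dilation_degree_le_def
proof (intro allI impI)
  fix bs :: "real list" and a :: real
  assume "length bs > d"
  then have "bs \<noteq> []"
    by auto
  then show "diff_ops bs (\<lambda>t. \<phi> ((\<lambda>x. t *\<^sub>R x) ` P)) a = 0"
    by (simp add: assms diff_ops_const)
qed

lemma dilation_degree_le_empty: "dilation_degree_le \<phi> d {}"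
  by (rule dilation_degree_le_const) simp

lemma dilation_degree_le_singleton:
  assumes "translation_invariant \<phi>"
  shows "dilation_degree_le \<phi> d {p}"
proof (rule dilation_degree_le_const)
  fix t :: real
  have "(\<lambda>x. t *\<^sub>R x) ` {p} = (\<lambda>y. t *\<^sub>R p + y) ` {0}"
    by simp
  moreover have "{0} \<in> convex_bodies"
    by (simp add: convex_bodies_def)
  ultimately show "\<phi> ((\<lambda>x. t *\<^sub>R x) ` {p}) = \<phi> {0}"
    using assms unfolding translation_invariant_def by metis
qed

lemma dilation_degree_le_translation:
  assumes "translation_invariant \<phi>" "P \<in> convex_bodies" "dilation_degree_le \<phi> d P"
  shows "dilation_degree_le \<phi> d ((\<lambda>x. w + x) ` P)"
proof -
  have "(\<lambda>x. t *\<^sub>R x) ` (\<lambda>x. w + x) ` P = (\<lambda>y. t *\<^sub>R w + y) ` (\<lambda>x. t *\<^sub>R x) ` P" for t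
    by (auto simp: image_image scaleR_right_distrib)
  then have "\<phi> ((\<lambda>x. t *\<^sub>R x) ` (\<lambda>x. w + x) ` P) = \<phi> ((\<lambda>x. t *\<^sub>R x) ` P)" for t
    using assms(1) convex_bodies_scaling[OF assms(2)] unfolding translation_invariant_def by metis
  then show ?thesis
    using assms(3) by (simp add: dilation_degree_le_def)
qed

lemma dilation_degree_le_Un:
  assumes "is_valuation \<phi>" "P1 \<in> convex_bodies" "P2 \<in> convex_bodies" "P1 \<union> P2 \<in> convex_bodies"
    and "dilation_degree_le \<phi> d P1" "dilation_degree_le \<phi> d P2" "dilation_degree_le \<phi> d (P1 \<inter> P2)"
  shows "dilation_degree_le \<phi> d (P1 \<union> P2)"
proof -
  have "\<phi> ((\<lambda>x. t *\<^sub>R x) ` (P1 \<union> P2)) = \<phi> ((\<lambda>x. t *\<^sub>R x) ` P1) + \<phi> ((\<lambda>x. t *\<^sub>R x) ` P2)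
      - \<phi> ((\<lambda>x. t *\<^sub>R x) ` (P1 \<inter> P2))" for t
    using is_valuation_dilation[OF assms(1), of t] assms(2-4) unfolding is_valuation_def by blast
  then show ?thesis
    using assms(5-7) by (simp add: dilation_degree_le_def diff_ops_add_diff)
qed

lemma aff_dim_Int_hyperplane_less:
  fixes P :: "'v::euclidean_space set"
  assumes "p \<in> P" "w \<bullet> p \<noteq> e"
  shows "aff_dim (P \<inter> {x. w \<bullet> x = e}) < aff_dim P"
proof (rule aff_dim_psubset)
  have "affine hull (P \<inter> {x. w \<bullet> x = e}) \<subseteq> {x. w \<bullet> x = e}"
    by (rule hull_minimal) (auto simp: affine_hyperplane)
  then have "p \<notin> affine hull (P \<inter> {x. w \<bullet> x = e})"
    using assms(2) by auto
  moreover have "p \<in> affine hull P"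
    using assms(1) by (rule hull_inc)
  moreover have "affine hull (P \<inter> {x. w \<bullet> x = e}) \<subseteq> affine hull P"
    by (intro hull_mono) blast
  ultimately show "affine hull (P \<inter> {x. w \<bullet> x = e}) \<subset> affine hull P"
    by blast
qed

lemma dilation_degree_le_cut:
  assumes val: "is_valuation \<phi>"
    and IH: "\<And>Q. polytope Q \<Longrightarrow> aff_dim Q \<le> int n \<Longrightarrow> dilation_degree_le \<phi> n Q"
    and P: "polytope P" "aff_dim P \<le> int (Suc n)"
    and le: "dilation_degree_le \<phi> (Suc n) (P \<inter> {x. w \<bullet> x \<le> e})"
    and ge: "dilation_degree_le \<phi> (Suc n) (P \<inter> {x. w \<bullet> x \<ge> e})"
  shows "dilation_degree_le \<phi> (Suc n) P"
proof -
  define P1 where "P1 = P \<inter> {x. w \<bullet> x \<le> e}"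
  define P2 where "P2 = P \<inter> {x. w \<bullet> x \<ge> e}"
  consider "P \<subseteq> {x. w \<bullet> x \<le> e}" | "P \<subseteq> {x. w \<bullet> x \<ge> e}"
    | p1 p2 where "p1 \<in> P" "w \<bullet> p1 > e" "p2 \<in> P" "w \<bullet> p2 < e"
    by (force simp: subset_eq not_le)
  then show ?thesis
  proof cases
    case 3
    have "P1 \<noteq> {}" "P2 \<noteq> {}" and P_Un: "P = P1 \<union> P2" and P_Int: "P1 \<inter> P2 = P \<inter> {x. w \<bullet> x = e}"
      using 3 by (auto simp: P1_def P2_def)
    moreover have "polytope P1" "polytope P2"
      unfolding P1_def P2_def
      by (intro polytope_Int_polyhedron P(1) polyhedron_halfspace_le polyhedron_halfspace_ge)+
    ultimately have "P1 \<in> convex_bodies" "P2 \<in> convex_bodies" "P1 \<union> P2 \<in> convex_bodies"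
      using P(1) by (auto intro: polytope_in_convex_bodies)
    moreover have "aff_dim (P1 \<inter> P2) \<le> int n"
      unfolding P_Int using aff_dim_Int_hyperplane_less[of p1 P w e] 3 P(2) by simp
    then have "dilation_degree_le \<phi> n (P1 \<inter> P2)"
      unfolding P_Int by (intro IH polytope_Int_polyhedron P(1) polyhedron_hyperplane)
    then have "dilation_degree_le \<phi> (Suc n) (P1 \<inter> P2)"
      by (rule dilation_degree_le_mono) simp
    ultimately have "dilation_degree_le \<phi> (Suc n) (P1 \<union> P2)"
      using dilation_degree_le_Un[OF val _ _ _ le[folded P1_def] ge[folded P2_def]] by blast
    then show ?thesis
      using P_Un by simp
  qed (use le ge in \<open>simp_all add: Int_absorb2\<close>)
qed

lemma dilation_degree_le_cone_cuts:
  assumes val: "is_valuation \<phi>"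
    and IH: "\<And>Q. polytope Q \<Longrightarrow> aff_dim Q \<le> int n \<Longrightarrow> dilation_degree_le \<phi> n Q"
    and "finite W" "polytope P" "aff_dim P \<le> int (Suc n)"
    and cells: "\<And>C. polyhedron C \<Longrightarrow> (\<And>x t. x \<in> C \<Longrightarrow> t \<ge> 0 \<Longrightarrow> t *\<^sub>R x \<in> C) \<Longrightarrow>
      (\<forall>w\<in>W. C \<subseteq> {x. w \<bullet> x \<le> 0} \<or> C \<subseteq> {x. w \<bullet> x \<ge> 0}) \<Longrightarrow> dilation_degree_le \<phi> (Suc n) (P \<inter> C)"
  shows "dilation_degree_le \<phi> (Suc n) P"
  using \<open>finite W\<close> assms(4,5) cells
proof (induction W arbitrary: P)
  case empty
  then show ?case
    by (metis Int_UNIV_right empty_iff polyhedron_UNIV UNIV_I)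
next
  case (insert w W)
  have "dilation_degree_le \<phi> (Suc n) (P \<inter> H)"
    if H: "H = {x. w \<bullet> x \<le> 0} \<or> H = {x. w \<bullet> x \<ge> 0}" for H
  proof (rule insert.IH)
    have "polyhedron H"
      using H polyhedron_halfspace_le polyhedron_halfspace_ge by blast
    then show "polytope (P \<inter> H)"
      using insert.prems(1) polytope_Int_polyhedron by blast
    show "aff_dim (P \<inter> H) \<le> int (Suc n)"
      using insert.prems(2) aff_dim_subset[of "P \<inter> H" P] by auto
    fix C assume C: "polyhedron C" "\<And>x t. x \<in> C \<Longrightarrow> t \<ge> 0 \<Longrightarrow> t *\<^sub>R x \<in> C"
      "\<forall>w\<in>W. C \<subseteq> {x. w \<bullet> x \<le> 0} \<or> C \<subseteq> {x. w \<bullet> x \<ge> 0}"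
    have "polyhedron (H \<inter> C)"
      using \<open>polyhedron H\<close> C(1) by blast
    moreover have "t *\<^sub>R x \<in> H \<inter> C" if "x \<in> H \<inter> C" "t \<ge> 0" for x t
      using that H C(2) by (auto simp: mult_nonneg_nonpos mult_nonneg_nonneg)
    moreover have "\<forall>v\<in>insert w W. H \<inter> C \<subseteq> {x. v \<bullet> x \<le> 0} \<or> H \<inter> C \<subseteq> {x. v \<bullet> x \<ge> 0}"
      using H C(3) by blast
    ultimately have "dilation_degree_le \<phi> (Suc n) (P \<inter> (H \<inter> C))"
      by (rule insert.prems(3))
    then show "dilation_degree_le \<phi> (Suc n) (P \<inter> H \<inter> C)"
      by (simp add: Int_assoc)
  qed
  then show ?case
    using dilation_degree_le_cut[OF val IH insert.prems(1,2)] by blast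
qed

section \<open>Pyramids\<close>

text \<open>For \<open>B\<close> in a hyperplane \<open>k \<bullet> z = 1\<close> this is the pyramid with apex 0 and base \<open>h B\<close>.\<close>

definition pyramid :: "real \<Rightarrow> 'v::real_vector set \<Rightarrow> 'v set" where
  "pyramid h B = {m *\<^sub>R z |m z. 0 \<le> m \<and> m \<le> h \<and> z \<in> B}"

lemma in_pyramidI: "0 \<le> m \<Longrightarrow> m \<le> h \<Longrightarrow> z \<in> B \<Longrightarrow> m *\<^sub>R z \<in> pyramid h B"
  by (auto simp: pyramid_def)

lemma pyramidE:
  assumes "x \<in> pyramid h B"
  obtains m z where "0 \<le> m" "m \<le> h" "z \<in> B" "x = m *\<^sub>R z"
  using assms by (auto simp: pyramid_def)

lemma pyramid_mono: "h \<le> h' \<Longrightarrow> pyramid h B \<subseteq> pyramid h' B"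
  by (force simp: pyramid_def)

lemma zero_in_pyramid: "0 \<le> h \<Longrightarrow> B \<noteq> {} \<Longrightarrow> 0 \<in> pyramid h B"
  by (force simp: pyramid_def)

lemma scaling_pyramid:
  assumes "0 \<le> t" "0 \<le> h"
  shows "(\<lambda>x. t *\<^sub>R x) ` pyramid h B = pyramid (t * h) B"
proof
  show "(\<lambda>x. t *\<^sub>R x) ` pyramid h B \<subseteq> pyramid (t * h) B"
    using assms by (force simp: pyramid_def mult_left_mono)
  show "pyramid (t * h) B \<subseteq> (\<lambda>x. t *\<^sub>R x) ` pyramid h B"
  proof
    fix x assume "x \<in> pyramid (t * h) B"
    then obtain m z where m: "0 \<le> m" "m \<le> t * h" and "z \<in> B" and x: "x = m *\<^sub>R z"
      by (auto simp: pyramid_def)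
    show "x \<in> (\<lambda>x. t *\<^sub>R x) ` pyramid h B"
    proof (cases "t = 0")
      case True
      then have "x = t *\<^sub>R (0 *\<^sub>R z)"
        using m x by simp
      then show ?thesis
        using \<open>z \<in> B\<close> assms by (force simp: pyramid_def)
    next
      case False
      then have "x = t *\<^sub>R ((m / t) *\<^sub>R z)" "0 \<le> m / t" "m / t \<le> h"
        using assms m x by (simp_all add: pos_divide_le_eq mult.commute)
      then show ?thesis
        using \<open>z \<in> B\<close> by (force simp: pyramid_def)
    qed
  qed
qed

lemma pyramid_one_eq_convex_hull:
  assumes "convex B" "B \<noteq> {}"
  shows "pyramid 1 B = convex hull (insert 0 B)"
proof -
  have hull: "convex hull (insert 0 B)
      = {x. \<exists>u\<ge>0. \<exists>v\<ge>0. \<exists>b. u + v = 1 \<and> b \<in> B \<and> x = u *\<^sub>R 0 + v *\<^sub>R b}"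
    using convex_hull_insert[OF assms(2), of 0] convex_hull_eq[THEN iffD2, OF assms(1)] by simp
  show ?thesis
  proof (intro equalityI subsetI)
    fix x assume "x \<in> pyramid 1 B"
    then obtain m z where "0 \<le> m" "m \<le> 1" "z \<in> B" "x = m *\<^sub>R z"
      by (rule pyramidE)
    then have "1 - m \<ge> 0 \<and> m \<ge> 0 \<and> (1 - m) + m = 1 \<and> z \<in> B \<and> x = (1 - m) *\<^sub>R 0 + m *\<^sub>R z"
      by simp
    then show "x \<in> convex hull (insert 0 B)"
      unfolding hull by blast
  next
    fix x assume "x \<in> convex hull (insert 0 B)"
    then obtain u v b where "u \<ge> 0" "v \<ge> 0" "u + v = 1" "b \<in> B" "x = v *\<^sub>R b"
      unfolding hull by auto
    then show "x \<in> pyramid 1 B"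
      by (simp add: in_pyramidI)
  qed
qed

lemma pyramid_in_convex_bodies:
  assumes "B \<in> convex_bodies" "0 \<le> h"
  shows "pyramid h B \<in> convex_bodies"
proof -
  have "pyramid 1 B \<in> convex_bodies"
    using assms(1) pyramid_one_eq_convex_hull[of B]
    by (simp add: convex_bodies_def compact_convex_hull convex_convex_hull)
  moreover have "pyramid h B = (\<lambda>x. h *\<^sub>R x) ` pyramid 1 B"
    using scaling_pyramid[of h 1 B] assms(2) by (metis mult.right_neutral zero_le_one)
  ultimately show ?thesis
    by (simp add: convex_bodies_scaling)
qed

lemma set_plus_pyramid_subset:
  assumes "0 \<le> s" "convex B"
  shows "(\<lambda>x. s *\<^sub>R x) ` B + pyramid r B \<subseteq> pyramid (s + r) B"
proof
  fix x assume "x \<in> (\<lambda>x. s *\<^sub>R x) ` B + pyramid r B"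
  then obtain z1 m z2 where "z1 \<in> B" "z2 \<in> B" "0 \<le> m" "m \<le> r" and x: "x = s *\<^sub>R z1 + m *\<^sub>R z2"
    by (auto elim!: set_plus_elim pyramidE)
  show "x \<in> pyramid (s + r) B"
  proof (cases "s + m = 0")
    case True
    then have "x = 0 *\<^sub>R z1"
      using x \<open>0 \<le> s\<close> \<open>0 \<le> m\<close> by (simp add: add_nonneg_eq_0_iff)
    moreover have "0 \<le> s + r"
      using \<open>0 \<le> s\<close> \<open>0 \<le> m\<close> \<open>m \<le> r\<close> by linarith
    ultimately show ?thesis
      using \<open>z1 \<in> B\<close> in_pyramidI[of 0 "s + r" z1 B] by simp
  next
    case False
    then have sm: "s + m > 0"
      using \<open>0 \<le> s\<close> \<open>0 \<le> m\<close> by linarith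
    define z where "z = (s / (s + m)) *\<^sub>R z1 + (m / (s + m)) *\<^sub>R z2"
    have "z \<in> B"
      unfolding z_def using \<open>z1 \<in> B\<close> \<open>z2 \<in> B\<close> \<open>0 \<le> m\<close> assms sm
      by (intro convexD) (simp_all add: add_divide_distrib[symmetric])
    moreover have "x = (s + m) *\<^sub>R z"
      using x sm by (simp add: z_def scaleR_add_right)
    ultimately show ?thesis
      using sm \<open>m \<le> r\<close> by (simp add: in_pyramidI)
  qed
qed

lemma pyramid_add_height:
  assumes "0 \<le> s" "0 \<le> r" "convex B"
  shows "pyramid (s + r) B = pyramid s B \<union> ((\<lambda>x. s *\<^sub>R x) ` B + pyramid r B)"
proof (intro equalityI subsetI)
  fix x assume "x \<in> pyramid (s + r) B"
  then obtain m z where m: "0 \<le> m" "m \<le> s + r" and z: "z \<in> B" and x: "x = m *\<^sub>R z"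
    by (rule pyramidE)
  show "x \<in> pyramid s B \<union> ((\<lambda>x. s *\<^sub>R x) ` B + pyramid r B)"
  proof (cases "m \<le> s")
    case True
    then show ?thesis
      using m z x by (simp add: in_pyramidI)
  next
    case False
    then have "(m - s) *\<^sub>R z \<in> pyramid r B"
      using m z by (simp add: in_pyramidI)
    moreover have "x = s *\<^sub>R z + (m - s) *\<^sub>R z"
      using x by (simp add: algebra_simps)
    ultimately show ?thesis
      using z by (auto intro: set_plus_intro)
  qed
next
  fix x assume "x \<in> pyramid s B \<union> ((\<lambda>x. s *\<^sub>R x) ` B + pyramid r B)"
  then show "x \<in> pyramid (s + r) B"
    using pyramid_mono[of s "s + r" B] set_plus_pyramid_subset[OF assms(1,3)] assms(2) by auto
qed

lemma pyramid_Int_base_set_plus: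
  assumes "0 \<le> s" "0 \<le> r" "B \<noteq> {}" "\<forall>z\<in>B. k \<bullet> z = 1"
  shows "pyramid s B \<inter> ((\<lambda>x. s *\<^sub>R x) ` B + pyramid r B) = (\<lambda>x. s *\<^sub>R x) ` B"
proof (intro equalityI subsetI)
  fix x assume x: "x \<in> pyramid s B \<inter> ((\<lambda>x. s *\<^sub>R x) ` B + pyramid r B)"
  then obtain m z where "m \<le> s" "z \<in> B" "x = m *\<^sub>R z"
    by (auto elim: pyramidE)
  then have "k \<bullet> x = m"
    using assms(4) by simp
  obtain z1 m' z2 where "z1 \<in> B" "z2 \<in> B" "0 \<le> m'" and x_sum: "x = s *\<^sub>R z1 + m' *\<^sub>R z2"
    using x by (auto elim!: set_plus_elim pyramidE)
  then have "k \<bullet> x = s + m'"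
    using assms(4) by (simp add: inner_add_right)
  then have "m' = 0"
    using \<open>k \<bullet> x = m\<close> \<open>m \<le> s\<close> \<open>0 \<le> m'\<close> by linarith
  then have "x = s *\<^sub>R z1"
    using x_sum by simp
  then show "x \<in> (\<lambda>x. s *\<^sub>R x) ` B"
    using \<open>z1 \<in> B\<close> by blast
next
  fix x assume "x \<in> (\<lambda>x. s *\<^sub>R x) ` B"
  then obtain z where z: "z \<in> B" "x = s *\<^sub>R z"
    by blast
  then have "x \<in> pyramid s B"
    using assms(1) by (simp add: in_pyramidI)
  moreover have "s *\<^sub>R z + 0 \<in> (\<lambda>x. s *\<^sub>R x) ` B + pyramid r B"
    using z(1) zero_in_pyramid[OF assms(2,3)] by (intro set_plus_intro) auto
  then have "x \<in> (\<lambda>x. s *\<^sub>R x) ` B + pyramid r B"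
    using z(2) by simp
  ultimately show "x \<in> pyramid s B \<inter> ((\<lambda>x. s *\<^sub>R x) ` B + pyramid r B)"
    by blast
qed

lemma diff_op_dilation_pyramid:
  assumes val: "is_valuation \<phi>" and B: "B \<in> convex_bodies" "\<forall>z\<in>B. k \<bullet> z = 1"
    and "0 \<le> s" "0 \<le> r"
  shows "diff_op r (\<lambda>t. \<phi> ((\<lambda>x. t *\<^sub>R x) ` pyramid 1 B)) s
    = \<phi> ((\<lambda>x. s *\<^sub>R x) ` B + pyramid r B) - \<phi> ((\<lambda>x. s *\<^sub>R x) ` B)"
proof -
  let ?sB = "(\<lambda>x. s *\<^sub>R x) ` B"
  have "B \<noteq> {}" "convex B"
    using B(1) by (auto simp: convex_bodies_def)
  note add_height = pyramid_add_height[OF \<open>0 \<le> s\<close> \<open>0 \<le> r\<close> \<open>convex B\<close>]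
  have "pyramid s B \<in> convex_bodies" "?sB + pyramid r B \<in> convex_bodies"
    using B(1) \<open>0 \<le> s\<close> \<open>0 \<le> r\<close>
    by (simp_all add: pyramid_in_convex_bodies convex_bodies_set_plus convex_bodies_scaling)
  moreover have "pyramid s B \<union> (?sB + pyramid r B) \<in> convex_bodies"
    unfolding add_height[symmetric] using B(1) \<open>0 \<le> s\<close> \<open>0 \<le> r\<close> by (simp add: pyramid_in_convex_bodies)
  ultimately have "\<phi> (pyramid (s + r) B) = \<phi> (pyramid s B) + \<phi> (?sB + pyramid r B) - \<phi> ?sB"
    using val add_height pyramid_Int_base_set_plus[OF \<open>0 \<le> s\<close> \<open>0 \<le> r\<close> \<open>B \<noteq> {}\<close> B(2)]
    unfolding is_valuation_def by metis
  then show ?thesis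
    using \<open>0 \<le> s\<close> \<open>0 \<le> r\<close> by (simp add: diff_op_def scaling_pyramid)
qed

lemma dilation_degree_le_pyramid:
  fixes \<phi> :: "'v::euclidean_space set \<Rightarrow> 'a::ab_group_add"
  assumes ti: "translation_invariant \<phi>" and val: "is_valuation \<phi>"
    and B: "B \<in> convex_bodies" "\<forall>z\<in>B. k \<bullet> z = 1"
    and IH: "\<And>\<psi> :: 'v set \<Rightarrow> 'a. translation_invariant \<psi> \<Longrightarrow> is_valuation \<psi> \<Longrightarrow>
      dilation_degree_le \<psi> n B"
  shows "dilation_degree_le \<phi> (Suc n) (pyramid 1 B)"
  unfolding dilation_degree_le_def
proof (intro allI impI)
  fix bs :: "real list" and a :: real
  assume len: "Suc n < length bs" and nonneg: "\<forall>b\<in>set bs. 0 \<le> b" and "0 \<le> a"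
  then obtain bs' r where bs: "bs = bs' @ [r]"
    by (metis length_greater_0_conv less_trans rev_exhaust zero_less_Suc)
  have "0 \<le> r" "\<forall>b\<in>set bs'. 0 \<le> b" "n < length bs'"
    using len nonneg bs by auto
  define \<psi> where "\<psi> K = \<phi> (K + pyramid r B) - \<phi> K" for K
  have "pyramid r B \<in> convex_bodies"
    using B(1) \<open>0 \<le> r\<close> by (rule pyramid_in_convex_bodies)
  then have "is_valuation \<psi>" "translation_invariant \<psi>"
    unfolding \<psi>_def[abs_def]
    using val ti by (simp_all add: is_valuation_set_plus_diff translation_invariant_set_plus_diff)
  then have "dilation_degree_le \<psi> n B"
    by (rule IH[rotated])
  have "diff_ops bs (\<lambda>t. \<phi> ((\<lambda>x. t *\<^sub>R x) ` pyramid 1 B)) a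
      = diff_ops bs' (diff_op r (\<lambda>t. \<phi> ((\<lambda>x. t *\<^sub>R x) ` pyramid 1 B))) a"
    by (simp add: bs diff_ops_append_single)
  also have "\<dots> = diff_ops bs' (\<lambda>s. \<psi> ((\<lambda>x. s *\<^sub>R x) ` B)) a"
    using diff_op_dilation_pyramid[OF val B _ \<open>0 \<le> r\<close>] \<open>\<forall>b\<in>set bs'. 0 \<le> b\<close> \<open>0 \<le> a\<close>
    unfolding \<psi>_def by (rule diff_ops_cong_nonneg)
  also have "\<dots> = 0"
    using \<open>dilation_degree_le \<psi> n B\<close> \<open>\<forall>b\<in>set bs'. 0 \<le> b\<close> \<open>n < length bs'\<close> \<open>0 \<le> a\<close>
    by (simp add: dilation_degree_le_def)
  finally show "diff_ops bs (\<lambda>t. \<phi> ((\<lambda>x. t *\<^sub>R x) ` pyramid 1 B)) a = 0" .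
qed

section \<open>Polytopes\<close>

lemma polyhedron_containing_0_normal_form:
  fixes P :: "'v::euclidean_space set"
  assumes "polyhedron P" "0 \<in> P"
  obtains A G where "finite A" "finite G" "P = {x. (\<forall>a\<in>A. a \<bullet> x \<le> 0) \<and> (\<forall>g\<in>G. g \<bullet> x \<le> 1)}"
proof -
  obtain F where F: "finite F" "P = \<Inter>F" "\<And>h. h \<in> F \<Longrightarrow> \<exists>a b. h = {x. a \<bullet> x \<le> b}"
    using assms(1) unfolding polyhedron_def by metis
  then obtain a b where ab: "\<And>h x. h \<in> F \<Longrightarrow> x \<in> h \<longleftrightarrow> a h \<bullet> x \<le> b h"
    by (metis mem_Collect_eq)
  have "0 \<le> b h" if "h \<in> F" for h
    using ab[OF that, of 0] assms(2) F(2) that by auto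
  then have halfspace: "a h \<bullet> x \<le> b h \<longleftrightarrow>
      (if b h = 0 then a h \<bullet> x \<le> 0 else ((1 / b h) *\<^sub>R a h) \<bullet> x \<le> 1)" if "h \<in> F" for h x
    using that by (auto simp: pos_divide_le_eq less_le)
  define A where "A = a ` {h\<in>F. b h = 0}"
  define G where "G = (\<lambda>h. (1 / b h) *\<^sub>R a h) ` {h\<in>F. b h \<noteq> 0}"
  have "P = {x. (\<forall>a\<in>A. a \<bullet> x \<le> 0) \<and> (\<forall>g\<in>G. g \<bullet> x \<le> 1)}"
    unfolding F(2) A_def G_def by (auto simp: ab halfspace split: if_splits)
  moreover have "finite A" "finite G"
    using F(1) by (simp_all add: A_def G_def)
  ultimately show thesis
    using that by blast
qed

lemma bounded_ray_eq_0:
  fixes x :: "'a::real_normed_vector"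
  assumes "bounded S" "\<And>t. 0 \<le> t \<Longrightarrow> t *\<^sub>R x \<in> S"
  shows "x = 0"
proof (rule ccontr)
  assume "x \<noteq> 0"
  obtain M where M: "\<And>y. y \<in> S \<Longrightarrow> norm y \<le> M"
    using assms(1) unfolding bounded_iff by blast
  define t where "t = (\<bar>M\<bar> + 1) / norm x"
  have "0 \<le> t" "norm (t *\<^sub>R x) = \<bar>M\<bar> + 1"
    using \<open>x \<noteq> 0\<close> by (simp_all add: t_def)
  then show False
    using M[OF assms(2)] by fastforce
qed

lemma finite_dominant_normal:
  fixes G :: "'a::real_inner set"
  assumes "finite G" "G \<noteq> {}"
    and "\<And>g g'. g \<in> G \<Longrightarrow> g' \<in> G \<Longrightarrow> C \<subseteq> {x. (g - g') \<bullet> x \<le> 0} \<or> C \<subseteq> {x. (g - g') \<bullet> x \<ge> 0}"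
  shows "\<exists>k\<in>G. \<forall>g\<in>G. \<forall>x\<in>C. g \<bullet> x \<le> k \<bullet> x"
  using assms
proof (induction G rule: finite_ne_induct)
  case (singleton g)
  then show ?case
    by simp
next
  case (insert g F)
  then obtain k where k: "k \<in> F" "\<forall>g\<in>F. \<forall>x\<in>C. g \<bullet> x \<le> k \<bullet> x"
    by (metis insertCI)
  from insert.prems[of g k] k(1)
  consider "C \<subseteq> {x. (g - k) \<bullet> x \<le> 0}" | "C \<subseteq> {x. (g - k) \<bullet> x \<ge> 0}"
    by blast
  then show ?case
  proof cases
    case 1
    then show ?thesis
      using k by (auto simp: inner_diff_left)
  next
    case 2
    then have "\<forall>x\<in>C. k \<bullet> x \<le> g \<bullet> x"
      by (auto simp: inner_diff_left)
    then have "\<forall>g'\<in>insert g F. \<forall>x\<in>C. g' \<bullet> x \<le> g \<bullet> x"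
      using k(2) by (auto intro: order_trans)
    then show ?thesis
      by blast
  qed
qed

lemma bounded_cone_slice_mem_pyramid:
  fixes Q D :: "'v::real_inner set"
  assumes "bounded Q" and Q: "Q = {x \<in> D. k \<bullet> x \<le> 1}"
    and cone: "\<And>x t. x \<in> D \<Longrightarrow> 0 \<le> t \<Longrightarrow> t *\<^sub>R x \<in> D"
    and "x \<in> Q" "x \<noteq> 0"
  shows "x \<in> pyramid 1 (Q \<inter> {x. k \<bullet> x = 1})"
proof -
  have "0 < k \<bullet> x"
  proof (rule ccontr)
    assume "\<not> 0 < k \<bullet> x"
    have "t *\<^sub>R x \<in> Q" if "0 \<le> t" for t
    proof -
      have "t * (k \<bullet> x) \<le> 0"
        using that \<open>\<not> 0 < k \<bullet> x\<close> by (simp add: mult_nonneg_nonpos)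
      then show ?thesis
        using that \<open>x \<in> Q\<close> cone unfolding Q by auto
    qed
    then show False
      using bounded_ray_eq_0[OF \<open>bounded Q\<close>] \<open>x \<noteq> 0\<close> by blast
  qed
  define z where "z = (1 / (k \<bullet> x)) *\<^sub>R x"
  have "z \<in> Q \<inter> {x. k \<bullet> x = 1}"
    using \<open>0 < k \<bullet> x\<close> \<open>x \<in> Q\<close> cone unfolding Q z_def by auto
  moreover have "x = (k \<bullet> x) *\<^sub>R z" "k \<bullet> x \<le> 1"
    using \<open>0 < k \<bullet> x\<close> \<open>x \<in> Q\<close> unfolding Q z_def by auto
  ultimately show ?thesis
    using \<open>0 < k \<bullet> x\<close> by (metis in_pyramidI less_imp_le)
qed

lemma bounded_cone_slice_eq_pyramid:
  fixes Q D :: "'v::real_inner set"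
  assumes "bounded Q" and Q: "Q = {x \<in> D. k \<bullet> x \<le> 1}"
    and cone: "\<And>x t. x \<in> D \<Longrightarrow> 0 \<le> t \<Longrightarrow> t *\<^sub>R x \<in> D"
    and "y \<in> Q" "y \<noteq> 0"
  shows "Q = pyramid 1 (Q \<inter> {x. k \<bullet> x = 1})"
proof (intro equalityI subsetI)
  have slice: "x \<in> pyramid 1 (Q \<inter> {x. k \<bullet> x = 1})" if "x \<in> Q" "x \<noteq> 0" for x
    by (rule bounded_cone_slice_mem_pyramid[OF \<open>bounded Q\<close> Q _ that]) (fact cone)
  fix x assume "x \<in> Q"
  show "x \<in> pyramid 1 (Q \<inter> {x. k \<bullet> x = 1})"
  proof (cases "x = 0")
    case True
    have "Q \<inter> {x. k \<bullet> x = 1} \<noteq> {}"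
      using slice[OF \<open>y \<in> Q\<close> \<open>y \<noteq> 0\<close>] by (auto elim: pyramidE)
    then show ?thesis
      using True zero_in_pyramid[OF zero_le_one] by simp
  next
    case False
    then show ?thesis
      using slice \<open>x \<in> Q\<close> by blast
  qed
next
  fix x assume "x \<in> pyramid 1 (Q \<inter> {x. k \<bullet> x = 1})"
  then obtain m z where "0 \<le> m" "m \<le> 1" "z \<in> Q" "k \<bullet> z = 1" "x = m *\<^sub>R z"
    by (auto elim: pyramidE)
  then show "x \<in> Q"
    using cone unfolding Q by auto
qed

lemma polytope_Int_cone_eq_pyramid:
  fixes P C :: "'v::euclidean_space set"
  assumes "bounded P" and P: "P = {x. (\<forall>a\<in>A. a \<bullet> x \<le> 0) \<and> (\<forall>g\<in>G. g \<bullet> x \<le> 1)}" "finite G"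
    and cone: "\<And>x t. x \<in> C \<Longrightarrow> 0 \<le> t \<Longrightarrow> t *\<^sub>R x \<in> C"
    and sides: "\<And>g g'. g \<in> G \<Longrightarrow> g' \<in> G \<Longrightarrow> C \<subseteq> {x. (g - g') \<bullet> x \<le> 0} \<or> C \<subseteq> {x. (g - g') \<bullet> x \<ge> 0}"
    and "y \<in> P \<inter> C" "y \<noteq> 0"
  obtains k where "P \<inter> C = pyramid 1 (P \<inter> C \<inter> {x. k \<bullet> x = 1})"
    "aff_dim (P \<inter> C \<inter> {x. k \<bullet> x = 1}) < aff_dim (P \<inter> C)"
proof -
  obtain k where dom: "\<forall>g\<in>G. \<forall>x\<in>C. g \<bullet> x \<le> k \<bullet> x" and "k \<in> G \<or> k = 0"
  proof (cases "G = {}")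
    case True
    then show ?thesis
      using that[of 0] by simp
  next
    case False
    then show ?thesis
      using finite_dominant_normal[OF \<open>finite G\<close> False sides] that by blast
  qed
  define D where "D = C \<inter> {x. \<forall>a\<in>A. a \<bullet> x \<le> 0}"
  have "P \<inter> C = {x \<in> D. k \<bullet> x \<le> 1}"
    using dom \<open>k \<in> G \<or> k = 0\<close> unfolding P(1) D_def by (auto intro: order_trans)
  moreover have "t *\<^sub>R x \<in> D" if "x \<in> D" "0 \<le> t" for x t
    using that cone by (auto simp: D_def mult_nonneg_nonpos)
  moreover have "bounded (P \<inter> C)"
    using \<open>bounded P\<close> by (rule bounded_subset) blast
  ultimately have "P \<inter> C = pyramid 1 (P \<inter> C \<inter> {x. k \<bullet> x = 1})"
    using \<open>y \<in> P \<inter> C\<close> \<open>y \<noteq> 0\<close> by (intro bounded_cone_slice_eq_pyramid)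
  moreover have "aff_dim (P \<inter> C \<inter> {x. k \<bullet> x = 1}) < aff_dim (P \<inter> C)"
    using P(1) cone[of y 0] \<open>y \<in> P \<inter> C\<close> by (intro aff_dim_Int_hyperplane_less[of 0]) auto
  ultimately show thesis
    by (rule that)
qed

lemma dilation_degree_le_polytope_Int_cone:
  fixes \<phi> :: "'v::euclidean_space set \<Rightarrow> 'a::ab_group_add"
  assumes ti: "translation_invariant \<phi>" and val: "is_valuation \<phi>"
    and IH: "\<And>\<psi> Q. translation_invariant (\<psi> :: 'v set \<Rightarrow> 'a) \<Longrightarrow> is_valuation \<psi> \<Longrightarrow> polytope Q \<Longrightarrow>
      aff_dim Q \<le> int n \<Longrightarrow> dilation_degree_le \<psi> n Q"
    and P: "polytope P" "aff_dim P \<le> int (Suc n)"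
      "P = {x. (\<forall>a\<in>A. a \<bullet> x \<le> 0) \<and> (\<forall>g\<in>G. g \<bullet> x \<le> 1)}" "finite G"
    and C: "polyhedron C" "\<And>x t. x \<in> C \<Longrightarrow> 0 \<le> t \<Longrightarrow> t *\<^sub>R x \<in> C"
      "\<And>g g'. g \<in> G \<Longrightarrow> g' \<in> G \<Longrightarrow> C \<subseteq> {x. (g - g') \<bullet> x \<le> 0} \<or> C \<subseteq> {x. (g - g') \<bullet> x \<ge> 0}"
  shows "dilation_degree_le \<phi> (Suc n) (P \<inter> C)"
proof -
  have "polytope (P \<inter> C)"
    using P(1) C(1) by (rule polytope_Int_polyhedron)
  show ?thesis
  proof (cases "P \<inter> C \<subseteq> {0}")
    case True
    then have "aff_dim (P \<inter> C) \<le> int n"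
      using aff_dim_subset[OF True] by simp
    then show ?thesis
      by (rule dilation_degree_le_mono[OF IH[OF ti val \<open>polytope (P \<inter> C)\<close>]]) simp
  next
    case False
    then obtain y where "y \<in> P \<inter> C" "y \<noteq> 0"
      by blast
    obtain k where pyr: "P \<inter> C = pyramid 1 (P \<inter> C \<inter> {x. k \<bullet> x = 1})"
      and dim: "aff_dim (P \<inter> C \<inter> {x. k \<bullet> x = 1}) < aff_dim (P \<inter> C)"
      using polytope_Int_cone_eq_pyramid[OF polytope_imp_bounded[OF P(1)] P(3,4) C(2,3)
          \<open>y \<in> P \<inter> C\<close> \<open>y \<noteq> 0\<close>] .
    define B where "B = P \<inter> C \<inter> {x. k \<bullet> x = 1}"
    have "aff_dim B \<le> int n"
      using dim aff_dim_subset[OF Int_lower1, of P C] P(2) by (simp add: B_def)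
    moreover have "polytope B"
      unfolding B_def using \<open>polytope (P \<inter> C)\<close> polyhedron_hyperplane by (rule polytope_Int_polyhedron)
    moreover have "B \<noteq> {}"
      using pyr \<open>y \<in> P \<inter> C\<close> by (auto simp: B_def pyramid_def)
    ultimately have "dilation_degree_le \<phi> (Suc n) (pyramid 1 B)"
      by (intro dilation_degree_le_pyramid[OF ti val, where k = k] polytope_in_convex_bodies IH)
        (simp_all add: B_def)
    then show ?thesis
      using pyr by (simp add: B_def)
  qed
qed

lemma dilation_degree_le_polytope_containing_0:
  fixes \<phi> :: "'v::euclidean_space set \<Rightarrow> 'a::ab_group_add"
  assumes ti: "translation_invariant \<phi>" and val: "is_valuation \<phi>"
    and IH: "\<And>\<psi> Q. translation_invariant (\<psi> :: 'v set \<Rightarrow> 'a) \<Longrightarrow> is_valuation \<psi> \<Longrightarrow> polytope Q \<Longrightarrow>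
      aff_dim Q \<le> int n \<Longrightarrow> dilation_degree_le \<psi> n Q"
    and P: "polytope P" "0 \<in> P" "aff_dim P \<le> int (Suc n)"
  shows "dilation_degree_le \<phi> (Suc n) P"
proof -
  obtain A G where "finite A" "finite G"
    and P_eq: "P = {x. (\<forall>a\<in>A. a \<bullet> x \<le> 0) \<and> (\<forall>g\<in>G. g \<bullet> x \<le> 1)}"
    using polyhedron_containing_0_normal_form[OF polytope_imp_polyhedron[OF P(1)] P(2)] .
  let ?W = "(\<lambda>(g, g'). g - g') ` (G \<times> G)"
  show ?thesis
  proof (rule dilation_degree_le_cone_cuts[OF val IH[OF ti val] _ P(1,3)])
    show "finite ?W"
      using \<open>finite G\<close> by simp
    fix C assume C: "polyhedron C" "\<And>x t. x \<in> C \<Longrightarrow> 0 \<le> t \<Longrightarrow> t *\<^sub>R x \<in> C"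
      "\<forall>w\<in>?W. C \<subseteq> {x. w \<bullet> x \<le> 0} \<or> C \<subseteq> {x. 0 \<le> w \<bullet> x}"
    show "dilation_degree_le \<phi> (Suc n) (P \<inter> C)"
    proof (rule dilation_degree_le_polytope_Int_cone[OF ti val IH P(1,3) P_eq \<open>finite G\<close> C(1,2)])
      fix g g' assume "g \<in> G" "g' \<in> G"
      then have "g - g' \<in> ?W"
        by force
      then show "C \<subseteq> {x. (g - g') \<bullet> x \<le> 0} \<or> C \<subseteq> {x. 0 \<le> (g - g') \<bullet> x}"
        using C(3) by blast
    qed
  qed
qed

lemma dilation_degree_le_polytope:
  fixes \<phi> :: "'v::euclidean_space set \<Rightarrow> 'a::ab_group_add"
  assumes "translation_invariant \<phi>" "is_valuation \<phi>" "polytope P" "aff_dim P \<le> int d"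
  shows "dilation_degree_le \<phi> d P"
  using assms
proof (induction d arbitrary: \<phi> P)
  case 0
  then consider "P = {}" | p where "P = {p}"
    using aff_dim_eq_0[of P] aff_dim_negative_iff[of P] by (metis int_ops(1) order_le_less)
  then show ?case
    using dilation_degree_le_empty dilation_degree_le_singleton[OF "0.prems"(1)] by metis
next
  case (Suc n)
  show ?case
  proof (cases "P = {}")
    case True
    then show ?thesis
      by (simp add: dilation_degree_le_empty)
  next
    case False
    then obtain v where "v \<in> P"
      by blast
    define P0 where "P0 = (\<lambda>x. - v + x) ` P"
    have "polytope P0" "aff_dim P0 \<le> int (Suc n)"
      using Suc.prems(3,4) polytope_translation_eq[of "- v" P] aff_dim_translation_eq[of "- v" P]
      by (simp_all add: P0_def)
    moreover have "0 \<in> P0"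
      unfolding P0_def using \<open>v \<in> P\<close> by (rule rev_image_eqI) simp
    ultimately have "dilation_degree_le \<phi> (Suc n) P0"
      using Suc.prems(1,2) Suc.IH by (intro dilation_degree_le_polytope_containing_0) auto
    moreover have "P0 \<in> convex_bodies"
      using \<open>polytope P0\<close> \<open>0 \<in> P0\<close> by (intro polytope_in_convex_bodies) auto
    moreover have "P = (\<lambda>x. v + x) ` P0"
      by (simp add: P0_def image_image)
    ultimately show ?thesis
      using dilation_degree_le_translation[OF Suc.prems(1)] by simp
  qed
qed

section \<open>Approximation by polytopes\<close>

lemma hausdorff_dist_le:
  assumes "K \<noteq> {}" "L \<noteq> {}"
    and "\<And>x. x \<in> K \<Longrightarrow> \<exists>y\<in>L. dist x y \<le> \<delta>" "\<And>y. y \<in> L \<Longrightarrow> \<exists>x\<in>K. dist y x \<le> \<delta>"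
  shows "hausdorff_dist K L \<le> \<delta>"
proof -
  have "setdist {x} L \<le> \<delta>" if "x \<in> K" for x
    using assms(3)[OF that] setdist_le_dist[of x "{x}" _ L] by force
  moreover have "setdist {y} K \<le> \<delta>" if "y \<in> L" for y
    using assms(4)[OF that] setdist_le_dist[of y "{y}" _ K] by force
  ultimately show ?thesis
    using assms(1,2) unfolding hausdorff_dist_def by (simp add: cSUP_least)
qed

lemma continuous_on_bodies_tendsto:
  assumes "continuous_on_bodies \<phi>" "K \<in> convex_bodies" "\<And>n. L n \<in> convex_bodies"
    and "\<And>n. hausdorff_dist K (L n) \<le> \<delta> n" "\<delta> \<longlonglongrightarrow> 0"
  shows "(\<lambda>n. \<phi> (L n)) \<longlonglongrightarrow> \<phi> K"
proof (rule topological_tendstoI)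
  fix U assume "open U" "\<phi> K \<in> U"
  then have "\<exists>e>0. \<forall>L\<in>convex_bodies. hausdorff_dist K L < e \<longrightarrow> \<phi> L \<in> U"
    using assms(1,2) unfolding continuous_on_bodies_def by blast
  then obtain e where "e > 0" and e: "\<forall>L\<in>convex_bodies. hausdorff_dist K L < e \<longrightarrow> \<phi> L \<in> U"
    by blast
  have "eventually (\<lambda>n. \<delta> n < e) sequentially"
    using order_tendstoD(2)[OF assms(5) \<open>e > 0\<close>] .
  then show "eventually (\<lambda>n. \<phi> (L n) \<in> U) sequentially"
  proof (rule eventually_mono)
    fix n assume "\<delta> n < e"
    then have "hausdorff_dist K (L n) < e"
      using assms(4)[of n] by linarith
    then show "\<phi> (L n) \<in> U"
      using e assms(3)[of n] by blast
  qed
qed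

lemma convex_body_polytope_approximation:
  assumes "X \<in> convex_bodies"
  obtains P where "\<And>n. polytope (P n)" "\<And>n. P n \<noteq> {}" "\<And>n. P n \<subseteq> X"
    "\<And>n x. x \<in> X \<Longrightarrow> \<exists>y\<in>P n. dist x y < 1 / real (Suc n)"
proof -
  have "compact X" "convex X" "X \<noteq> {}"
    using assms by (auto simp: convex_bodies_def)
  have "\<exists>S. finite S \<and> S \<subseteq> X \<and> X \<subseteq> (\<Union>y\<in>S. ball y (1 / real (Suc n)))" for n
    using seq_compact_imp_totally_bounded[OF compact_imp_seq_compact[OF \<open>compact X\<close>]] by simp
  then obtain S where S: "\<And>n. finite (S n)" "\<And>n. S n \<subseteq> X"
    "\<And>n. X \<subseteq> (\<Union>y\<in>S n. ball y (1 / real (Suc n)))"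
    by metis
  show thesis
  proof (rule that[of "\<lambda>n. convex hull (S n)"])
    show "polytope (convex hull (S n))" for n
      using S(1) by (auto simp: polytope_def)
    show "convex hull (S n) \<subseteq> X" for n
      using S(2) \<open>convex X\<close> by (rule hull_minimal)
    show "\<exists>y\<in>convex hull (S n). dist x y < 1 / real (Suc n)" if "x \<in> X" for n x
      using S(3) that hull_subset[of "S n" convex] by (fastforce simp: dist_commute)
    then show "convex hull (S n) \<noteq> {}" for n
      using \<open>X \<noteq> {}\<close> by blast
  qed
qed

lemma tendsto_dilation_approximation:
  assumes "continuous_on_bodies \<phi>" "X \<in> convex_bodies" "\<And>n. P n \<in> convex_bodies" "\<And>n. P n \<subseteq> X"
    and approx: "\<And>n x. x \<in> X \<Longrightarrow> \<exists>y\<in>P n. dist x y < 1 / real (Suc n)" and "0 \<le> t"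
  shows "(\<lambda>n. \<phi> ((\<lambda>x. t *\<^sub>R x) ` P n)) \<longlonglongrightarrow> \<phi> ((\<lambda>x. t *\<^sub>R x) ` X)"
proof (rule continuous_on_bodies_tendsto)
  show "(\<lambda>n. t / real (Suc n)) \<longlonglongrightarrow> 0"
    using LIMSEQ_Suc[OF lim_const_over_n[of t]] by simp
  show "hausdorff_dist ((\<lambda>x. t *\<^sub>R x) ` X) ((\<lambda>x. t *\<^sub>R x) ` P n) \<le> t / real (Suc n)" for n
  proof (rule hausdorff_dist_le)
    show "(\<lambda>x. t *\<^sub>R x) ` X \<noteq> {}" "(\<lambda>x. t *\<^sub>R x) ` P n \<noteq> {}"
      using assms(2,3) by (auto simp: convex_bodies_def)
    show "\<exists>y\<in>(\<lambda>x. t *\<^sub>R x) ` P n. dist x' y \<le> t / real (Suc n)" if "x' \<in> (\<lambda>x. t *\<^sub>R x) ` X" for x'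
    proof -
      obtain x y where "x \<in> X" "x' = t *\<^sub>R x" "y \<in> P n" "dist x y < 1 / real (Suc n)"
        using \<open>x' \<in> (\<lambda>x. t *\<^sub>R x) ` X\<close> approx by blast
      moreover have "dist (t *\<^sub>R x) (t *\<^sub>R y) = t * dist x y"
        using \<open>0 \<le> t\<close> by (simp add: dist_norm flip: scaleR_diff_right)
      ultimately show ?thesis
        using \<open>0 \<le> t\<close> mult_left_mono[of "dist x y" "1 / real (Suc n)" t] by force
    qed
    show "\<exists>x\<in>(\<lambda>x. t *\<^sub>R x) ` X. dist y x \<le> t / real (Suc n)" if "y \<in> (\<lambda>x. t *\<^sub>R x) ` P n" for y
      using that assms(4) \<open>0 \<le> t\<close> by force
  qed
  show "(\<lambda>x. t *\<^sub>R x) ` X \<in> convex_bodies" "(\<lambda>x. t *\<^sub>R x) ` P n \<in> convex_bodies" for n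
    using assms(2,3) by (simp_all add: convex_bodies_scaling)
qed (rule assms(1))

theorem theorem4p1:
  fixes \<phi> :: "'v::euclidean_space set \<Rightarrow> 'a::{topological_ab_group_add, t2_space}"
    and X :: "'v set" and d :: nat and bs :: "real list" and a :: real
  assumes "continuous_on_bodies \<phi>"
    and "translation_invariant \<phi>"
    and "is_valuation \<phi>"
    and "X \<in> convex_bodies"
    and "aff_dim X = int d"
    and "length bs = d + 1"
    and "\<forall>b\<in>set bs. b \<ge> 0"
    and "a \<ge> 0"
  shows "diff_ops bs (\<lambda>t. \<phi> ((\<lambda>x. t *\<^sub>R x) ` X)) a = 0"
proof -
  obtain P where P: "\<And>n. polytope (P n)" "\<And>n. P n \<noteq> {}" "\<And>n. P n \<subseteq> X"
    and approx: "\<And>n x. x \<in> X \<Longrightarrow> \<exists>y\<in>P n. dist x y < 1 / real (Suc n)"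
    using convex_body_polytope_approximation[OF assms(4)] by metis
  have "aff_dim (P n) \<le> int d" for n
    using aff_dim_subset[OF P(3)] assms(5) by simp
  then have "dilation_degree_le \<phi> d (P n)" for n
    by (rule dilation_degree_le_polytope[OF assms(2,3) P(1)])
  then have "diff_ops bs (\<lambda>t. \<phi> ((\<lambda>x. t *\<^sub>R x) ` P n)) a = 0" for n
    using assms(6-8) by (simp add: dilation_degree_le_def)
  moreover have "(\<lambda>n. diff_ops bs (\<lambda>t. \<phi> ((\<lambda>x. t *\<^sub>R x) ` P n)) a)
      \<longlonglongrightarrow> diff_ops bs (\<lambda>t. \<phi> ((\<lambda>x. t *\<^sub>R x) ` X)) a"
    using assms(1,4) polytope_in_convex_bodies[OF P(1,2)] P(3) approx
    by (intro tendsto_diff_ops tendsto_dilation_approximation assms(7,8))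
  ultimately have "(\<lambda>n. 0) \<longlonglongrightarrow> diff_ops bs (\<lambda>t. \<phi> ((\<lambda>x. t *\<^sub>R x) ` X)) a"
    by simp
  then show ?thesis
    using LIMSEQ_unique[OF tendsto_const] by metis
qed

end
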